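(* For $d\le3$, $E>0$ and $\epsilon\in(0,1]$ there exists a constant $K_{d,\epsilon,E}$, with $E\mapsto K_{d,\epsilon,E}$ bounded on compact subsets of $(0,\infty)$, such that for $\sigma\in\{0,1\}$, $\eta>0$, $q\in\mathbb R^d$ and either choice of sign, $$\sup_{v_1,v_2\in\mathbb R^d}\prod_{j=1}^d\big\{\langle v_{1,j}\rangle^{-1+\epsilon}\langle v_{2,j}\rangle^{-1+\epsilon}\big\}\,|\nu(q+v_1)-E\pm i\eta|^{-1}\,|\nu(q+\sigma v_1+v_2)-E\pm i\eta|^{-1}\le K_{d,\epsilon,E}(1+\eta^{-2})\prod_{j=1}^d\langle q_j\rangle^{-1+\epsilon}.$$
   Context: $\nu(p)=\frac12|p|^2$ for $p\in\mathbb R^d$; for real $t$, $\langle t\rangle=(1+t^2)^{1/2}$; $v_{i,j}$ and $q_j$ denote coordinates. *)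

theory Defs
  imports "HOL-Analysis.Analysis"
begin

definition nu :: "real ^ 'n \<Rightarrow> real" where
  "nu p = (1/2) * (norm p)^2"

definition jbr :: "real \<Rightarrow> real" where
  "jbr t = sqrt (1 + t^2)"

end

theory Submission
  imports Defs
begin

text \<open>
  Write \<open>a = q + v\<^sub>1\<close> and \<open>b = q + \<sigma> v\<^sub>1 + v\<^sub>2\<close> for the arguments of the two resolvents.
  Peetre's inequality \<open>jbr (x + y) \<le> 2 jbr x jbr y\<close> bounds \<open>jbr q\<^sub>j\<close> by
  \<open>4 jbr v\<^sub>1\<^sub>j jbr v\<^sub>2\<^sub>j\<close> times either \<open>jbr a\<^sub>j\<close> or \<open>jbr b\<^sub>j\<close>. As the exponent \<open>1 - \<epsilon>\<close>
  lies in \<open>[0, 1]\<close>, the weight in \<open>v\<^sub>1, v\<^sub>2\<close> is therefore at most the weight in \<open>q\<close> times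
  \<open>\<Prod>\<^sub>j 4 jbr a\<^sub>j \<le> 256 (1 + |a|\<^sup>2)\<^sup>2\<close>, and likewise for \<open>b\<close>; the geometric mean of the two
  bounds is \<open>256 (1 + |a|\<^sup>2) (1 + |b|\<^sup>2)\<close>, which needs \<open>d \<le> 4\<close>. Finally each resolvent
  \<open>|\<nu>(p) - E \<plusminus> i\<eta>|\<^sup>-\<^sup>1\<close> absorbs one factor \<open>1 + |p|\<^sup>2\<close> at the cost of \<open>C\<^sub>E (1 + \<eta>\<^sup>-\<^sup>1)\<close>.
\<close>

lemma jbr_ge_1: "1 \<le> jbr x"
  unfolding jbr_def by simp

lemma jbr_pos: "0 < jbr x"
  using jbr_ge_1 [of x] by simp

lemma jbr_add_le: "jbr (x + y) \<le> 2 * jbr x * jbr y"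
proof -
  have "(x + y)^2 + (x - y)^2 = 2 * x^2 + 2 * y^2"
    by (simp add: power2_eq_square algebra_simps)
  moreover have "4 * ((1 + x^2) * (1 + y^2)) = 4 + 4 * x^2 + 4 * y^2 + 4 * (x^2 * y^2)"
    by (simp add: algebra_simps)
  moreover have "0 \<le> (x - y)^2" "0 \<le> x^2" "0 \<le> y^2" "0 \<le> x^2 * y^2"
    by simp_all
  ultimately have "1 + (x + y)^2 \<le> 4 * ((1 + x^2) * (1 + y^2))"
    by linarith
  then have "jbr (x + y) \<le> sqrt (4 * ((1 + x^2) * (1 + y^2)))"
    unfolding jbr_def by (rule real_sqrt_le_mono)
  then show ?thesis
    by (simp add: jbr_def real_sqrt_mult mult.assoc)
qed

lemma jbr_le_shift: "jbr q \<le> 2 * jbr u * jbr (q + u)"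
  using jbr_add_le [of "q + u" "- u"] by (simp add: jbr_def mult_ac)

lemma jbr_le_two_shifts:
  assumes "\<sigma> \<in> {0, 1}"
  shows "jbr q \<le> 4 * jbr u * jbr v * jbr (q + \<sigma> * u + v)"
proof (cases "\<sigma> = 0")
  case True
  have "jbr q \<le> 2 * jbr v * jbr (q + v)"
    by (rule jbr_le_shift)
  also have "\<dots> \<le> 2 * (2 * jbr u) * jbr v * jbr (q + v)"
    using jbr_ge_1 [of u] jbr_pos [of v] jbr_pos [of "q + v"] by simp
  finally show ?thesis
    using True by simp
next
  case False
  with assms have "\<sigma> = 1"
    by simp
  have "jbr q \<le> 2 * jbr u * jbr (q + u)"
    by (rule jbr_le_shift)
  also have "\<dots> \<le> 2 * jbr u * (2 * jbr v * jbr (q + u + v))"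
    using jbr_le_shift [of "q + u" v] jbr_pos [of u] by simp
  finally show ?thesis
    using \<open>\<sigma> = 1\<close> by (simp add: mult_ac)
qed

lemma powr_le_max_1:
  fixes r w :: real
  assumes "0 < r" "0 \<le> w" "w \<le> 1"
  shows "r powr w \<le> max 1 r"
proof (cases "r \<le> 1")
  case True
  then show ?thesis
    using assms powr_le1 [of w r] by simp
next
  case False
  then have "r powr w \<le> r powr 1"
    using assms by (intro powr_mono) auto
  then show ?thesis
    using assms by simp
qed

lemma powr_weight_le:
  fixes q u v c w :: real
  assumes "0 \<le> w" "w \<le> 1" and pos: "0 < q" "0 < u" "0 < v"
    and "q \<le> c * u * v" "1 \<le> c"
  shows "u powr (- w) * v powr (- w) \<le> c * q powr (- w)"
proof -
  define r where "r = q / (u * v)"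
  have "0 < r"
    unfolding r_def using pos by simp
  have "r \<le> c"
    unfolding r_def using pos assms(6) by (simp add: divide_le_eq mult_ac)
  have "u powr (- w) * v powr (- w) = r powr w * q powr (- w)"
    unfolding r_def using pos by (simp add: powr_minus powr_divide powr_mult field_simps)
  also have "\<dots> \<le> c * q powr (- w)"
    using powr_le_max_1 [OF \<open>0 < r\<close> assms(1,2)] \<open>r \<le> c\<close> \<open>1 \<le> c\<close>
    by (intro mult_right_mono) auto
  finally show ?thesis .
qed

lemma prod_jbr_le_jbr_norm_power:
  fixes x :: "real ^ 'n"
  shows "(\<Prod>j\<in>UNIV. jbr (x $ j)) \<le> jbr (norm x) ^ CARD('n)"
proof -
  have "jbr (x $ j) \<le> jbr (norm x)" for j
  proof -
    have "\<bar>x $ j\<bar>^2 \<le> (norm x)^2"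
      using component_le_norm_cart [of x j] by (intro power_mono) auto
    then show ?thesis
      unfolding jbr_def by simp
  qed
  then have "(\<Prod>j\<in>UNIV. jbr (x $ j)) \<le> (\<Prod>j\<in>(UNIV :: 'n set). jbr (norm x))"
    by (intro prod_mono) (simp add: less_imp_le [OF jbr_pos])
  then show ?thesis
    by simp
qed

lemma prod_four_jbr_le:
  fixes x :: "real ^ 'n"
  assumes "CARD('n) \<le> 4"
  shows "(\<Prod>j\<in>UNIV. 4 * jbr (x $ j)) \<le> 256 * (1 + (norm x)^2)^2"
proof -
  have "(\<Prod>j\<in>UNIV. 4 * jbr (x $ j)) = 4 ^ CARD('n) * (\<Prod>j\<in>UNIV. jbr (x $ j))"
    by (simp add: prod.distrib)
  also have "\<dots> \<le> 4 ^ 4 * jbr (norm x) ^ 4"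
  proof (rule mult_mono)
    show "(4::real) ^ CARD('n) \<le> 4 ^ 4"
      using assms by (intro power_increasing) auto
    show "(\<Prod>j\<in>UNIV. jbr (x $ j)) \<le> jbr (norm x) ^ 4"
      using prod_jbr_le_jbr_norm_power [of x] power_increasing [OF assms jbr_ge_1 [of "norm x"]]
      by linarith
  qed (simp_all add: prod_nonneg less_imp_le [OF jbr_pos])
  also have "\<dots> = 256 * ((jbr (norm x))^2)^2"
    by (simp flip: power_mult)
  also have "\<dots> = 256 * (1 + (norm x)^2)^2"
    by (simp add: jbr_def)
  finally show ?thesis .
qed

lemma min_le_if_mult_le_square:
  fixes a b m :: real
  assumes "0 \<le> m" "a * b \<le> m^2"
  shows "min a b \<le> m"
proof (cases "min a b \<le> 0")
  case False
  have "min a b * min a b \<le> a * b"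
    by (rule mult_mono) (use False in auto)
  with assms(2) have "(min a b)^2 \<le> m^2"
    by (simp add: power2_eq_square)
  then show ?thesis
    using assms(1) by (rule power2_le_imp_le)
qed (use assms in simp)

definition resolvent_const :: "real \<Rightarrow> real" where
  "resolvent_const E = 4 + 1 / E + 4 * E"

lemma resolvent_const_pos: "0 < E \<Longrightarrow> 0 < resolvent_const E"
  unfolding resolvent_const_def by (intro add_pos_pos) auto

lemma div_le_resolvent_const:
  fixes t c y E :: real
  assumes "0 < E" "y \<noteq> 0" "0 \<le> t" "\<bar>t / 2 - E\<bar> \<le> c" "\<bar>y\<bar> \<le> c"
  shows "(1 + t) / c \<le> resolvent_const E * (1 + 1 / \<bar>y\<bar>)"
proof -
  have C: "4 + 1 / E \<le> resolvent_const E" "1 + 4 * E \<le> resolvent_const E"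
    unfolding resolvent_const_def using assms(1) by auto
  have C_y: "resolvent_const E * (1 + 1 / \<bar>y\<bar>) = resolvent_const E + resolvent_const E / \<bar>y\<bar>"
    by (simp add: algebra_simps)
  have "0 \<le> resolvent_const E / \<bar>y\<bar>"
    using resolvent_const_pos [OF assms(1)] by simp
  show ?thesis
  proof (cases "4 * E \<le> t")
    case True
    then have "0 < t" "t / 4 \<le> c"
      using assms(1,4) by auto
    then have "(1 + t) / c \<le> (1 + t) / (t / 4)"
      using assms(3) by (intro divide_left_mono) auto
    also have "\<dots> = 4 + 4 / t"
      using \<open>0 < t\<close> by (simp add: field_simps)
    also have "\<dots> \<le> 4 + 1 / E"
      using True assms(1) \<open>0 < t\<close> by (simp add: field_simps)
    also have "\<dots> \<le> resolvent_const E * (1 + 1 / \<bar>y\<bar>)"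
      using C(1) C_y \<open>0 \<le> resolvent_const E / \<bar>y\<bar>\<close> by linarith
    finally show ?thesis .
  next
    case False
    have "(1 + t) / c \<le> (1 + t) / \<bar>y\<bar>"
      using assms(2,3,5) by (intro divide_left_mono) auto
    also have "\<dots> \<le> resolvent_const E / \<bar>y\<bar>"
      using False C(2) by (intro divide_right_mono) auto
    also have "\<dots> \<le> resolvent_const E * (1 + 1 / \<bar>y\<bar>)"
      using C_y resolvent_const_pos [OF assms(1)] by linarith
    finally show ?thesis .
  qed
qed

lemma resolvent_nu_bound:
  fixes p :: "real ^ 'n"
  assumes "0 < E" "y \<noteq> 0"
  shows "(1 + (norm p)^2) * inverse (cmod (complex_of_real (nu p - E) + complex_of_real y * \<i>))
    \<le> resolvent_const E * (1 + 1 / \<bar>y\<bar>)"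
proof -
  define t where "t = (norm p)^2"
  define z where "z = Complex (t / 2 - E) y"
  have "complex_of_real (nu p - E) + complex_of_real y * \<i> = z"
    by (simp add: complex_eq_iff z_def t_def nu_def)
  moreover have "(1 + t) / cmod z \<le> resolvent_const E * (1 + 1 / \<bar>y\<bar>)"
    using abs_Re_le_cmod [of z] abs_Im_le_cmod [of z]
    by (intro div_le_resolvent_const assms) (simp_all add: z_def t_def)
  ultimately show ?thesis
    by (simp only: t_def divide_inverse)
qed

lemma prod_jbr_weight_le:
  fixes q v1 v2 x :: "real ^ 'n"
  assumes "0 \<le> w" "w \<le> 1" "\<And>j. jbr (q $ j) \<le> 4 * jbr (x $ j) * jbr (v1 $ j) * jbr (v2 $ j)"
  shows "(\<Prod>j\<in>UNIV. jbr (v1 $ j) powr (- w) * jbr (v2 $ j) powr (- w))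
    \<le> (\<Prod>j\<in>UNIV. 4 * jbr (x $ j)) * (\<Prod>j\<in>UNIV. jbr (q $ j) powr (- w))"
proof -
  have "jbr (v1 $ j) powr (- w) * jbr (v2 $ j) powr (- w) \<le> 4 * jbr (x $ j) * jbr (q $ j) powr (- w)"
    for j
    using jbr_ge_1 [of "x $ j"]
    by (intro powr_weight_le [OF assms(1,2) jbr_pos jbr_pos jbr_pos assms(3)]) simp
  then have "(\<Prod>j\<in>UNIV. jbr (v1 $ j) powr (- w) * jbr (v2 $ j) powr (- w))
      \<le> (\<Prod>j\<in>UNIV. 4 * jbr (x $ j) * jbr (q $ j) powr (- w))"
    by (intro prod_mono) simp
  then show ?thesis
    by (simp add: prod.distrib)
qed

lemma prod_jbr_weight_le_norms:
  fixes q v1 v2 :: "real ^ 'n"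
  assumes "CARD('n) \<le> 4" "0 \<le> w" "w \<le> 1" "\<sigma> \<in> {0, 1}"
  shows "(\<Prod>j\<in>UNIV. jbr (v1 $ j) powr (- w) * jbr (v2 $ j) powr (- w))
    \<le> 256 * (1 + (norm (q + v1))^2) * (1 + (norm (q + \<sigma> *\<^sub>R v1 + v2))^2)
      * (\<Prod>j\<in>UNIV. jbr (q $ j) powr (- w))"
    (is "?P \<le> 256 * ?A * ?B * ?Q")
proof -
  define a where "a = q + v1"
  define b where "b = q + \<sigma> *\<^sub>R v1 + v2"
  have P_le_a: "?P \<le> (\<Prod>j\<in>UNIV. 4 * jbr (a $ j)) * ?Q"
    using jbr_le_two_shifts [of 0 "q $ j" "v2 $ j" "v1 $ j" for j]
    by (intro prod_jbr_weight_le assms(2,3)) (simp add: a_def mult_ac)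
  have P_le_b: "?P \<le> (\<Prod>j\<in>UNIV. 4 * jbr (b $ j)) * ?Q"
    using jbr_le_two_shifts [OF assms(4), of "q $ j" "v1 $ j" "v2 $ j" for j]
    by (intro prod_jbr_weight_le assms(2,3)) (simp add: b_def mult_ac)
  have "0 \<le> ?Q"
    by (simp add: prod_nonneg)
  have "(\<Prod>j\<in>UNIV. 4 * jbr (a $ j)) * ?Q * ((\<Prod>j\<in>UNIV. 4 * jbr (b $ j)) * ?Q)
      \<le> 256 * ?A^2 * ?Q * (256 * ?B^2 * ?Q)"
    using prod_four_jbr_le [OF assms(1), of a] prod_four_jbr_le [OF assms(1), of b] \<open>0 \<le> ?Q\<close>
    by (intro mult_mono mult_right_mono) (simp_all add: a_def b_def prod_nonneg less_imp_le [OF jbr_pos])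
  also have "\<dots> = (256 * ?A * ?B * ?Q)^2"
    by (simp only: power2_eq_square mult_ac)
  finally have "min ((\<Prod>j\<in>UNIV. 4 * jbr (a $ j)) * ?Q) ((\<Prod>j\<in>UNIV. 4 * jbr (b $ j)) * ?Q)
      \<le> 256 * ?A * ?B * ?Q"
    using \<open>0 \<le> ?Q\<close> by (intro min_le_if_mult_le_square) simp_all
  with P_le_a P_le_b show ?thesis
    by (meson min.bounded_iff order_trans)
qed

lemma square_one_plus_inverse_le:
  fixes \<eta> :: real
  assumes "0 < \<eta>"
  shows "(1 + 1 / \<eta>)^2 \<le> 2 * (1 + \<eta> powr (-2))"
  using zero_le_power2 [of "1 - 1 / \<eta>"] assms
  by (simp add: powr_minus powr_realpow power2_eq_square divide_inverse algebra_simps)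

lemma weighted_resolvent_product_le:
  fixes q v1 v2 :: "real ^ 'n" and w E y \<sigma> :: real
  assumes "CARD('n) \<le> 4" "0 \<le> w" "w \<le> 1" "0 < E" "\<sigma> \<in> {0, 1}" "y \<noteq> 0"
  shows "(\<Prod>j\<in>UNIV. jbr (v1 $ j) powr (- w) * jbr (v2 $ j) powr (- w))
      * inverse (cmod (complex_of_real (nu (q + v1) - E) + complex_of_real y * \<i>))
      * inverse (cmod (complex_of_real (nu (q + \<sigma> *\<^sub>R v1 + v2) - E) + complex_of_real y * \<i>))
    \<le> 512 * (resolvent_const E)^2 * (1 + \<bar>y\<bar> powr (-2)) * (\<Prod>j\<in>UNIV. jbr (q $ j) powr (- w))"
    (is "?P * ?R (q + v1) * ?R (q + \<sigma> *\<^sub>R v1 + v2) \<le> _ * ?Q")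
proof -
  let ?a = "q + v1" and ?b = "q + \<sigma> *\<^sub>R v1 + v2" and ?C = "resolvent_const E * (1 + 1 / \<bar>y\<bar>)"
  have "0 \<le> ?Q"
    by (simp add: prod_nonneg)
  have "?P * ?R ?a * ?R ?b \<le> 256 * (1 + (norm ?a)^2) * (1 + (norm ?b)^2) * ?Q * ?R ?a * ?R ?b"
    using prod_jbr_weight_le_norms [OF assms(1,2,3,5)] by (simp add: mult_right_mono)
  also have "\<dots> = 256 * ?Q * (((1 + (norm ?a)^2) * ?R ?a) * ((1 + (norm ?b)^2) * ?R ?b))"
    by (simp only: mult_ac)
  also have "\<dots> \<le> 256 * ?Q * (?C * ?C)"
    by (rule mult_left_mono [OF mult_mono [OF resolvent_nu_bound resolvent_nu_bound]])
      (use assms resolvent_const_pos [OF assms(4)] \<open>0 \<le> ?Q\<close> in simp_all)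
  also have "\<dots> = 256 * (resolvent_const E)^2 * (1 + 1 / \<bar>y\<bar>)^2 * ?Q"
    by (simp only: power2_eq_square mult_ac)
  also have "\<dots> \<le> 256 * (resolvent_const E)^2 * (2 * (1 + \<bar>y\<bar> powr (-2))) * ?Q"
    using square_one_plus_inverse_le [of "\<bar>y\<bar>"] assms(6) \<open>0 \<le> ?Q\<close>
    by (intro mult_right_mono mult_left_mono) simp_all
  also have "\<dots> = 512 * (resolvent_const E)^2 * (1 + \<bar>y\<bar> powr (-2)) * ?Q"
    by simp
  finally show ?thesis .
qed

theorem lemma23:
  fixes \<epsilon> :: real
  assumes "CARD('n::finite) \<le> 3"
    and "0 < \<epsilon>" and "\<epsilon> \<le> 1"
  shows "\<exists>K :: real \<Rightarrow> real.
     (\<forall>C. compact C \<and> C \<subseteq> {0<..} \<longrightarrow> bounded (K ` C)) \<and>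
     (\<forall>E>0. \<forall>(\<sigma>::real)\<in>{0,1}. \<forall>\<eta>>0. \<forall>q :: real ^ 'n. \<forall>s::real\<in>{-1,1}.
        \<forall>v1 v2 :: real ^ 'n.
          (\<Prod>j\<in>UNIV. jbr (v1 $ j) powr (-1 + \<epsilon>) * jbr (v2 $ j) powr (-1 + \<epsilon>))
          * inverse (cmod (complex_of_real (nu (q + v1) - E) + complex_of_real (s * \<eta>) * \<i>))
          * inverse (cmod (complex_of_real (nu (q + \<sigma> *\<^sub>R v1 + v2) - E) + complex_of_real (s * \<eta>) * \<i>))
          \<le> K E * (1 + \<eta> powr (-2)) * (\<Prod>j\<in>UNIV. jbr (q $ j) powr (-1 + \<epsilon>)))"
proof (intro exI [of _ "\<lambda>E. 512 * (resolvent_const E)^2"] conjI allI impI ballI)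
  show "bounded ((\<lambda>E. 512 * (resolvent_const E)^2) ` C)" if "compact C \<and> C \<subseteq> {0<..}" for C
    using that unfolding resolvent_const_def
    by (intro compact_imp_bounded compact_continuous_image continuous_intros) auto
next
  fix E \<sigma> \<eta> s :: real and q v1 v2 :: "real ^ 'n"
  assume "0 < E" "\<sigma> \<in> {0, 1}" "0 < \<eta>" "s \<in> {-1, 1}"
  moreover from this have "s * \<eta> \<noteq> 0" "\<bar>s * \<eta>\<bar> = \<eta>"
    by auto
  moreover have "-1 + \<epsilon> = - (1 - \<epsilon>)"
    by simp
  ultimately show "(\<Prod>j\<in>UNIV. jbr (v1 $ j) powr (-1 + \<epsilon>) * jbr (v2 $ j) powr (-1 + \<epsilon>))
      * inverse (cmod (complex_of_real (nu (q + v1) - E) + complex_of_real (s * \<eta>) * \<i>))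
      * inverse (cmod (complex_of_real (nu (q + \<sigma> *\<^sub>R v1 + v2) - E) + complex_of_real (s * \<eta>) * \<i>))
    \<le> 512 * (resolvent_const E)^2 * (1 + \<eta> powr (-2)) * (\<Prod>j\<in>UNIV. jbr (q $ j) powr (-1 + \<epsilon>))"
    using weighted_resolvent_product_le [of "1 - \<epsilon>" E \<sigma> "s * \<eta>" v1 v2 q] assms
    by simp
qed

end
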